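(* Suppose that $\Lambda$ is a row-finite $k$-graph with no sources. If there exists a vector $\xi \in \mathbb{R}^{\Lambda^0}_{>0}$ which is an eigenvector for each adjacency matrix $A_i$ of $\Lambda$, with eigenvalue $\beta_i$, then the formula $\mu(Z(\lambda)) := \beta^{-d(\lambda)} \xi_{s(\lambda)}$ ($\lambda\in\Lambda$) defines a measure on the Borel $\sigma$-algebra of $\Lambda^\infty$.
   Context: A $k$-graph is a countable small category $\Lambda$ with a functor $d:\Lambda\to\mathbb{N}^k$ with unique factorization; vertices $\Lambda^0$, range/source $r,s$; $v\Lambda^n w$ the paths of degree $n$ with range $v$ and source $w$; row-finite/no sources: $v\Lambda^n$ finite/nonempty. The adjacency matrices are $A_i(v,w)=|v\Lambda^{e_i}w|$, $1\le i\le k$. For $n\in\mathbb{Z}^k$, $\beta^n=\beta_1^{n_1}\cdots\beta_k^{n_k}$. $\Lambda^\infty$ is the set of infinite paths (degree-preserving functors $\Omega_k\to\Lambda$, where $\Omega_k$ has morphisms $(m,n)$ with $m\le n$ in $\mathbb{N}^k$), $Z(\lambda)$ the cylinder set of infinite paths beginning with $\lambda$; the cylinder sets generate the topology and the Borel $\sigma$-algebra. *)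

theory Defs
  imports "HOL-Analysis.Analysis"
begin

text \<open>
A k-graph is presented by: a set P of morphisms (paths), range and source maps r s,
a partial composition cmp (cmp l m = l m, meaningful when s l = r m), and a degree
map d into N^k, where N^k is represented as 'k => nat for a finite nonempty index
type 'k (so k = CARD('k)), ordered pointwise.  Objects are identified with their
identity morphisms, as usual for k-graphs.
\<close>

definition kgraph ::
  "'p set \<Rightarrow> ('p \<Rightarrow> 'p) \<Rightarrow> ('p \<Rightarrow> 'p) \<Rightarrow> ('p \<Rightarrow> 'p \<Rightarrow> 'p)
     \<Rightarrow> ('p \<Rightarrow> ('k::finite \<Rightarrow> nat)) \<Rightarrow> bool" where
  "kgraph P r s cmp d \<longleftrightarrow>
     countable P \<and>
     \<comment> \<open>small category (objects = identity morphisms)\<close>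
     (\<forall>l\<in>P. r l \<in> P \<and> s l \<in> P \<and>
        r (r l) = r l \<and> s (r l) = r l \<and> r (s l) = s l \<and> s (s l) = s l) \<and>
     (\<forall>l\<in>P. cmp (r l) l = l \<and> cmp l (s l) = l) \<and>
     (\<forall>l\<in>P. \<forall>m\<in>P. s l = r m \<longrightarrow>
        cmp l m \<in> P \<and> r (cmp l m) = r l \<and> s (cmp l m) = s m) \<and>
     (\<forall>l\<in>P. \<forall>m\<in>P. \<forall>n\<in>P. s l = r m \<and> s m = r n \<longrightarrow>
        cmp (cmp l m) n = cmp l (cmp m n)) \<and>
     \<comment> \<open>degree functor into N^k\<close>
     (\<forall>l\<in>P. d (r l) = (\<lambda>_. 0)) \<and>
     (\<forall>l\<in>P. \<forall>m\<in>P. s l = r m \<longrightarrow> d (cmp l m) = (\<lambda>i. d l i + d m i)) \<and>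
     \<comment> \<open>unique factorisation\<close>
     (\<forall>l\<in>P. \<forall>m n. d l = (\<lambda>i. m i + n i) \<longrightarrow>
        (\<exists>!(a, b). a \<in> P \<and> b \<in> P \<and> s a = r b \<and> d a = m \<and> d b = n \<and> l = cmp a b))"

definition vertices :: "'p set \<Rightarrow> ('p \<Rightarrow> 'p) \<Rightarrow> 'p set" where
  "vertices P r = {v \<in> P. r v = v}"

definition paths_between ::
  "'p set \<Rightarrow> ('p \<Rightarrow> 'p) \<Rightarrow> ('p \<Rightarrow> 'p) \<Rightarrow> ('p \<Rightarrow> ('k \<Rightarrow> nat))
     \<Rightarrow> 'p \<Rightarrow> ('k \<Rightarrow> nat) \<Rightarrow> 'p \<Rightarrow> 'p set" where
  "paths_between P r s d v n w = {l \<in> P. d l = n \<and> r l = v \<and> s l = w}"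

definition paths_from ::
  "'p set \<Rightarrow> ('p \<Rightarrow> 'p) \<Rightarrow> ('p \<Rightarrow> ('k \<Rightarrow> nat)) \<Rightarrow> 'p \<Rightarrow> ('k \<Rightarrow> nat) \<Rightarrow> 'p set" where
  "paths_from P r d v n = {l \<in> P. d l = n \<and> r l = v}"

definition row_finite ::
  "'p set \<Rightarrow> ('p \<Rightarrow> 'p) \<Rightarrow> ('p \<Rightarrow> ('k \<Rightarrow> nat)) \<Rightarrow> bool" where
  "row_finite P r d \<longleftrightarrow> (\<forall>v\<in>vertices P r. \<forall>n. finite (paths_from P r d v n))"

definition no_sources ::
  "'p set \<Rightarrow> ('p \<Rightarrow> 'p) \<Rightarrow> ('p \<Rightarrow> ('k \<Rightarrow> nat)) \<Rightarrow> bool" where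
  "no_sources P r d \<longleftrightarrow> (\<forall>v\<in>vertices P r. \<forall>n. paths_from P r d v n \<noteq> {})"

definition unit_deg :: "'k \<Rightarrow> ('k \<Rightarrow> nat)" where
  "unit_deg i = (\<lambda>j. if j = i then 1 else 0)"

definition adj ::
  "'p set \<Rightarrow> ('p \<Rightarrow> 'p) \<Rightarrow> ('p \<Rightarrow> 'p) \<Rightarrow> ('p \<Rightarrow> ('k \<Rightarrow> nat))
     \<Rightarrow> 'k \<Rightarrow> 'p \<Rightarrow> 'p \<Rightarrow> nat" where
  "adj P r s d i v w = card (paths_between P r s d v (unit_deg i) w)"

text \<open>Infinite paths: degree-preserving functors Omega_k -> Lambda.  A functor x is
recorded by its action on morphisms (m,n), m <= n, of Omega_k; it is set to
undefined off the morphisms of Omega_k so that it is determined by its action.\<close>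
definition inf_paths ::
  "'p set \<Rightarrow> ('p \<Rightarrow> 'p) \<Rightarrow> ('p \<Rightarrow> 'p) \<Rightarrow> ('p \<Rightarrow> 'p \<Rightarrow> 'p) \<Rightarrow> ('p \<Rightarrow> ('k \<Rightarrow> nat))
     \<Rightarrow> ((('k \<Rightarrow> nat) \<times> ('k \<Rightarrow> nat)) \<Rightarrow> 'p) set" where
  "inf_paths P r s cmp d =
     {x. (\<forall>m n. m \<le> n \<longrightarrow> x (m, n) \<in> P \<and> d (x (m, n)) = (\<lambda>i. n i - m i)
                         \<and> r (x (m, n)) = x (m, m) \<and> s (x (m, n)) = x (n, n)) \<and>
         (\<forall>m. r (x (m, m)) = x (m, m)) \<and>
         (\<forall>m n p. m \<le> n \<and> n \<le> p \<longrightarrow> cmp (x (m, n)) (x (n, p)) = x (m, p)) \<and>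
         (\<forall>m n. \<not> m \<le> n \<longrightarrow> x (m, n) = undefined)}"

definition cylinder ::
  "'p set \<Rightarrow> ('p \<Rightarrow> 'p) \<Rightarrow> ('p \<Rightarrow> 'p) \<Rightarrow> ('p \<Rightarrow> 'p \<Rightarrow> 'p) \<Rightarrow> ('p \<Rightarrow> ('k \<Rightarrow> nat))
     \<Rightarrow> 'p \<Rightarrow> ((('k \<Rightarrow> nat) \<times> ('k \<Rightarrow> nat)) \<Rightarrow> 'p) set" where
  "cylinder P r s cmp d l = {x \<in> inf_paths P r s cmp d. x ((\<lambda>_. 0), d l) = l}"

definition borel_inf_paths ::
  "'p set \<Rightarrow> ('p \<Rightarrow> 'p) \<Rightarrow> ('p \<Rightarrow> 'p) \<Rightarrow> ('p \<Rightarrow> 'p \<Rightarrow> 'p) \<Rightarrow> ('p \<Rightarrow> ('k \<Rightarrow> nat))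
     \<Rightarrow> ((('k \<Rightarrow> nat) \<times> ('k \<Rightarrow> nat)) \<Rightarrow> 'p) set set" where
  "borel_inf_paths P r s cmp d =
     sigma_sets (inf_paths P r s cmp d) (cylinder P r s cmp d ` P)"

end

theory Submission
  imports Defs
begin

text \<open>
  The set function is defined on the ring of finite unions of cylinders \<open>Z(\<lambda>)\<close> with
  \<open>d(\<lambda>) = (N, \<dots>, N)\<close> and extended by Caratheodory's theorem. Iterating the eigenvector
  equations gives \<open>\<Sum>\<mu> \<in> v\<Lambda>^n. \<xi>(s(\<mu>)) = \<beta>^n \<xi>(v)\<close>, so the weight \<open>\<beta>^(-d(\<lambda>)) \<xi>(s(\<lambda>))\<close> of \<open>\<lambda>\<close> is
  the sum of the weights of its extensions to any larger degree. Hence the set function does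
  not depend on how a set is written as a union of cylinders, and it is additive. As there are
  no sources, every finite path extends to an infinite one, and by row-finiteness a decreasing
  sequence of nonempty sets of the ring has nonempty intersection (Koenig's lemma); this gives
  continuity at the empty set.
\<close>

lemma ex_in_finite_forall_antimono:
  assumes fin: "finite F" and ex: "\<And>i::nat. \<exists>a\<in>F. p i a"
    and antimono: "\<And>i j a. i \<le> j \<Longrightarrow> p j a \<Longrightarrow> p i a"
  shows "\<exists>a\<in>F. \<forall>i. p i a"
proof (rule ccontr)
  assume "\<not> ?thesis"
  then obtain g where g: "\<And>a. a \<in> F \<Longrightarrow> \<not> p (g a) a" by metis
  obtain a where a: "a \<in> F" "p (Max (g ` F)) a" using ex by blast
  have "g a \<le> Max (g ` F)" using fin a(1) by simp
  then show False using antimono a g by blast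
qed

lemma prod_power_add_unit_deg:
  fixes x :: "'k::finite \<Rightarrow> 'a::comm_monoid_mult"
  shows "(\<Prod>j\<in>UNIV. x j ^ (n j + unit_deg i j)) = x i * (\<Prod>j\<in>UNIV. x j ^ n j)"
proof -
  have "(\<Prod>j\<in>UNIV. x j ^ (n j + unit_deg i j)) = (\<Prod>j\<in>UNIV. x j ^ n j) * (\<Prod>j\<in>UNIV. x j ^ unit_deg i j)"
    by (simp add: power_add prod.distrib)
  also have "(\<Prod>j\<in>UNIV. x j ^ unit_deg i j) = (\<Prod>j\<in>UNIV. if j = i then x j else 1)"
    unfolding unit_deg_def by (rule prod.cong) auto
  finally show ?thesis by (simp add: mult.commute)
qed

locale k_graph =
  fixes P :: "'p set" and r s :: "'p \<Rightarrow> 'p" and cmp :: "'p \<Rightarrow> 'p \<Rightarrow> 'p"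
    and d :: "'p \<Rightarrow> ('k::finite \<Rightarrow> nat)"
  assumes rs_closed: "l \<in> P \<Longrightarrow> r l \<in> P" "l \<in> P \<Longrightarrow> s l \<in> P"
    and rs_idem: "l \<in> P \<Longrightarrow> r (r l) = r l" "l \<in> P \<Longrightarrow> s (r l) = r l"
      "l \<in> P \<Longrightarrow> r (s l) = s l" "l \<in> P \<Longrightarrow> s (s l) = s l"
    and cmp_id: "l \<in> P \<Longrightarrow> cmp (r l) l = l" "l \<in> P \<Longrightarrow> cmp l (s l) = l"
    and cmp_closed: "l \<in> P \<Longrightarrow> m \<in> P \<Longrightarrow> s l = r m \<Longrightarrow> cmp l m \<in> P"
      "l \<in> P \<Longrightarrow> m \<in> P \<Longrightarrow> s l = r m \<Longrightarrow> r (cmp l m) = r l"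
      "l \<in> P \<Longrightarrow> m \<in> P \<Longrightarrow> s l = r m \<Longrightarrow> s (cmp l m) = s m"
    and cmp_assoc: "l \<in> P \<Longrightarrow> m \<in> P \<Longrightarrow> n \<in> P \<Longrightarrow> s l = r m \<Longrightarrow> s m = r n \<Longrightarrow>
      cmp (cmp l m) n = cmp l (cmp m n)"
    and d_r: "l \<in> P \<Longrightarrow> d (r l) = (\<lambda>_. 0)"
    and d_cmp: "l \<in> P \<Longrightarrow> m \<in> P \<Longrightarrow> s l = r m \<Longrightarrow> d (cmp l m) = (\<lambda>i. d l i + d m i)"
    and unique_factorisation: "l \<in> P \<Longrightarrow> d l = (\<lambda>i. p i + q i) \<Longrightarrow>
      \<exists>!(a, b). a \<in> P \<and> b \<in> P \<and> s a = r b \<and> d a = p \<and> d b = q \<and> l = cmp a b"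

lemma k_graph_if_kgraph: "kgraph P r s cmp d \<Longrightarrow> k_graph P r s cmp d"
  unfolding kgraph_def k_graph_def by (elim conjE) (intro conjI allI impI; simp)

context k_graph
begin

lemma vertices_rs: "l \<in> P \<Longrightarrow> r l \<in> vertices P r" "l \<in> P \<Longrightarrow> s l \<in> vertices P r"
  using rs_closed rs_idem unfolding vertices_def by auto

subsection \<open>Segments of a path\<close>

text \<open>For \<open>m \<le> d l\<close>, \<open>init_seg l m\<close> and \<open>rest_seg l m\<close> are the segments
  \<open>l(0, m)\<close> and \<open>l(m, d l)\<close> of the paper.\<close>

definition factorisation :: "'p \<Rightarrow> ('k \<Rightarrow> nat) \<Rightarrow> 'p \<times> 'p" where
  "factorisation l m = (THE (a, b). a \<in> P \<and> b \<in> P \<and> s a = r b \<and> d a = m \<and>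
     d b = (\<lambda>i. d l i - m i) \<and> l = cmp a b)"

definition init_seg :: "'p \<Rightarrow> ('k \<Rightarrow> nat) \<Rightarrow> 'p" where
  "init_seg l m = fst (factorisation l m)"

definition rest_seg :: "'p \<Rightarrow> ('k \<Rightarrow> nat) \<Rightarrow> 'p" where
  "rest_seg l m = snd (factorisation l m)"

lemma init_rest_seg:
  assumes "l \<in> P" "m \<le> d l"
  shows "init_seg l m \<in> P" "rest_seg l m \<in> P" "s (init_seg l m) = r (rest_seg l m)"
    "d (init_seg l m) = m" "d (rest_seg l m) = (\<lambda>i. d l i - m i)"
    "cmp (init_seg l m) (rest_seg l m) = l"
proof -
  have "d l = (\<lambda>i. m i + (d l i - m i))" using assms(2) by (auto simp: le_fun_def)
  from theI'[OF unique_factorisation[OF assms(1) this]]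
  have "case factorisation l m of (a, b) \<Rightarrow>
      a \<in> P \<and> b \<in> P \<and> s a = r b \<and> d a = m \<and> d b = (\<lambda>i. d l i - m i) \<and> l = cmp a b"
    unfolding factorisation_def .
  moreover obtain a b where ab: "factorisation l m = (a, b)"
    by (cases "factorisation l m")
  ultimately show "init_seg l m \<in> P" "rest_seg l m \<in> P" "s (init_seg l m) = r (rest_seg l m)"
    "d (init_seg l m) = m" "d (rest_seg l m) = (\<lambda>i. d l i - m i)"
    "cmp (init_seg l m) (rest_seg l m) = l"
    unfolding init_seg_def rest_seg_def ab by simp_all
qed

lemma init_rest_seg_cmp:
  assumes "a \<in> P" "b \<in> P" "s a = r b"
  shows "init_seg (cmp a b) (d a) = a" "rest_seg (cmp a b) (d a) = b"
proof -
  define l where "l = cmp a b"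
  have l: "l \<in> P" "d l = (\<lambda>i. d a i + (d l i - d a i))" and b: "d b = (\<lambda>i. d l i - d a i)"
    using cmp_closed(1)[OF assms] d_cmp[OF assms] unfolding l_def by auto
  have "factorisation l (d a) = (a, b)"
    unfolding factorisation_def
    by (rule the1_equality[OF unique_factorisation[OF l]]) (use assms b l_def in simp)
  then show "init_seg (cmp a b) (d a) = a" "rest_seg (cmp a b) (d a) = b"
    unfolding init_seg_def rest_seg_def l_def by simp_all
qed

lemma init_rest_seg_full: "l \<in> P \<Longrightarrow> init_seg l (d l) = l" "l \<in> P \<Longrightarrow> rest_seg l (d l) = s l"
  using init_rest_seg_cmp[of l "s l"] rs_closed rs_idem cmp_id by auto

lemma init_rest_seg_zero:
  "l \<in> P \<Longrightarrow> init_seg l (\<lambda>_. 0) = r l" "l \<in> P \<Longrightarrow> rest_seg l (\<lambda>_. 0) = l"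
  using init_rest_seg_cmp[of "r l" l] rs_closed rs_idem cmp_id d_r by auto

lemma vertex_if_d_zero:
  assumes "l \<in> P" "d l = (\<lambda>_. 0)"
  shows "r l = l"
  using init_rest_seg_zero(1)[OF assms(1)] init_rest_seg_full(1)[OF assms(1)] assms(2) by metis

lemma r_init_seg: "l \<in> P \<Longrightarrow> m \<le> d l \<Longrightarrow> r (init_seg l m) = r l"
  and s_rest_seg: "l \<in> P \<Longrightarrow> m \<le> d l \<Longrightarrow> s (rest_seg l m) = s l"
  using cmp_closed(2,3)[OF init_rest_seg(1-3), of l m] init_rest_seg(6)[of l m] by simp_all

lemma init_seg_init_seg:
  assumes "l \<in> P" "m \<le> n" "n \<le> d l"
  shows "init_seg (init_seg l n) m = init_seg l m"
    and "rest_seg l m = cmp (rest_seg (init_seg l n) m) (rest_seg l n)"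
proof -
  define a b where "a = init_seg l n" and "b = rest_seg l n"
  have a: "a \<in> P" "d a = n" "m \<le> d a" and b: "b \<in> P" "s a = r b" and l: "l = cmp a b"
    using init_rest_seg[OF assms(1,3)] assms(2) unfolding a_def b_def by auto
  define p q where "p = init_seg a m" and "q = rest_seg a m"
  have pq: "p \<in> P" "q \<in> P" "s p = r q" "d p = m" "a = cmp p q" "s q = s a"
    using init_rest_seg[OF a(1,3)] s_rest_seg[OF a(1,3)] unfolding p_def q_def by auto
  have "l = cmp (cmp p q) b"
    using l pq(5) by simp
  also have "\<dots> = cmp p (cmp q b)"
    using pq(1-3,6) b by (intro cmp_assoc) simp_all
  finally have l': "cmp p (cmp q b) = l" by (rule sym)
  have "s p = r (cmp q b)"
    using pq b cmp_closed(2)[of q b] by simp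
  from init_rest_seg_cmp[OF pq(1) cmp_closed(1)[of q b] this]
  have "init_seg l m = p" "rest_seg l m = cmp q b"
    unfolding l' pq(4) using pq b by simp_all
  then show "init_seg (init_seg l n) m = init_seg l m"
    and "rest_seg l m = cmp (rest_seg (init_seg l n) m) (rest_seg l n)"
    unfolding a_def b_def p_def q_def by simp_all
qed

lemma cmp_cancel:
  assumes "a \<in> P" "b \<in> P" "s a = r b" "a' \<in> P" "b' \<in> P" "s a' = r b'"
    and "d a = d a'" "cmp a b = cmp a' b'"
  shows "a = a'" "b = b'"
  using init_rest_seg_cmp[of a b] init_rest_seg_cmp[of a' b'] assms by metis+

lemma paths_from_add:
  "paths_from P r d v (\<lambda>i. m i + n i) =
     (\<lambda>(a, b). cmp a b) ` (SIGMA a:paths_from P r d v m. paths_from P r d (s a) n)"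
proof (intro equalityI subsetI)
  fix t assume "t \<in> paths_from P r d v (\<lambda>i. m i + n i)"
  then have t: "t \<in> P" "d t = (\<lambda>i. m i + n i)" "r t = v" and le: "m \<le> d t"
    unfolding paths_from_def by (auto simp: le_fun_def)
  have "init_seg t m \<in> paths_from P r d v m"
    using init_rest_seg[OF t(1) le] r_init_seg[OF t(1) le] t(3) unfolding paths_from_def by simp
  moreover have "rest_seg t m \<in> paths_from P r d (s (init_seg t m)) n"
    using init_rest_seg[OF t(1) le] t(2) unfolding paths_from_def by simp
  ultimately show "t \<in> (\<lambda>(a, b). cmp a b) ` (SIGMA a:paths_from P r d v m. paths_from P r d (s a) n)"
    using init_rest_seg(6)[OF t(1) le] by (intro image_eqI[of _ _ "(init_seg t m, rest_seg t m)"]) auto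
next
  fix t assume "t \<in> (\<lambda>(a, b). cmp a b) ` (SIGMA a:paths_from P r d v m. paths_from P r d (s a) n)"
  then obtain a b where "a \<in> paths_from P r d v m" "b \<in> paths_from P r d (s a) n" "t = cmp a b"
    by auto
  then show "t \<in> paths_from P r d v (\<lambda>i. m i + n i)"
    using cmp_closed[of a b] d_cmp[of a b] unfolding paths_from_def by auto
qed

lemma inj_on_cmp_paths_from:
  "inj_on (\<lambda>(a, b). cmp a b) (SIGMA a:paths_from P r d v m. paths_from P r d (s a) n)"
  by (rule inj_onI) (auto simp: paths_from_def intro: cmp_cancel)

definition extensions :: "'p \<Rightarrow> ('k \<Rightarrow> nat) \<Rightarrow> 'p set" where
  "extensions l n = {t \<in> P. d t = n \<and> init_seg t (d l) = l}"

lemma extensions_eq_image: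
  assumes "l \<in> P" "d l \<le> n"
  shows "extensions l n = cmp l ` paths_from P r d (s l) (\<lambda>i. n i - d l i)"
proof (intro equalityI subsetI)
  fix t assume "t \<in> extensions l n"
  then have t: "t \<in> P" "d t = n" "init_seg t (d l) = l" and le: "d l \<le> d t"
    using assms(2) unfolding extensions_def by auto
  show "t \<in> cmp l ` paths_from P r d (s l) (\<lambda>i. n i - d l i)"
    using init_rest_seg[OF t(1) le] t unfolding paths_from_def
    by (intro image_eqI[of _ _ "rest_seg t (d l)"]) auto
next
  fix t assume "t \<in> cmp l ` paths_from P r d (s l) (\<lambda>i. n i - d l i)"
  then obtain m where m: "m \<in> P" "d m = (\<lambda>i. n i - d l i)" "s l = r m" "t = cmp l m"
    unfolding paths_from_def by auto
  have "d t = n"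
    using d_cmp[OF assms(1) m(1,3)] m(2,4) assms(2) by (auto simp: le_fun_def)
  then show "t \<in> extensions l n"
    using cmp_closed(1)[OF assms(1) m(1,3)] init_rest_seg_cmp(1)[OF assms(1) m(1,3)] m(4)
    unfolding extensions_def by simp
qed

lemma inj_on_cmp_left: "l \<in> P \<Longrightarrow> inj_on (cmp l) (paths_from P r d (s l) n)"
  by (rule inj_onI) (auto simp: paths_from_def intro: cmp_cancel)

lemma paths_from_zero:
  assumes "v \<in> vertices P r"
  shows "paths_from P r d v (\<lambda>_. 0) = {v}"
  using assms vertex_if_d_zero d_r[of v] unfolding vertices_def paths_from_def by force

subsection \<open>Infinite paths\<close>

abbreviation \<Omega> where "\<Omega> \<equiv> inf_paths P r s cmp d"

abbreviation diag :: "nat \<Rightarrow> 'k \<Rightarrow> nat" where "diag N \<equiv> \<lambda>_. N"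

lemma inf_path_seg:
  assumes "x \<in> \<Omega>" "m \<le> n"
  shows "x (m, n) \<in> P" "d (x (m, n)) = (\<lambda>i. n i - m i)"
    "r (x (m, n)) = x (m, m)" "s (x (m, n)) = x (n, n)"
  using assms unfolding inf_paths_def by auto

lemma inf_path_cmp:
  "x \<in> \<Omega> \<Longrightarrow> m \<le> n \<Longrightarrow> n \<le> p \<Longrightarrow> cmp (x (m, n)) (x (n, p)) = x (m, p)"
  unfolding inf_paths_def by auto

lemma init_rest_seg_inf_path:
  assumes "x \<in> \<Omega>" "m \<le> n"
  shows "init_seg (x (diag 0, n)) m = x (diag 0, m)" "rest_seg (x (diag 0, n)) m = x (m, n)"
proof -
  have zero: "diag 0 \<le> m" by (simp add: le_fun_def)
  have "x (diag 0, m) \<in> P" "x (m, n) \<in> P" "s (x (diag 0, m)) = r (x (m, n))"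
    "d (x (diag 0, m)) = m" "cmp (x (diag 0, m)) (x (m, n)) = x (diag 0, n)"
    using inf_path_seg[OF assms(1) zero] inf_path_seg[OF assms] inf_path_cmp[OF assms(1) zero assms(2)]
    by simp_all
  with init_rest_seg_cmp[of "x (diag 0, m)" "x (m, n)"]
  show "init_seg (x (diag 0, n)) m = x (diag 0, m)" "rest_seg (x (diag 0, n)) m = x (m, n)"
    by simp_all
qed

lemma inf_path_of_init_segs:
  assumes g: "\<And>n. g n \<in> P" "\<And>n. d (g n) = n"
    and coherent: "\<And>m n. m \<le> n \<Longrightarrow> init_seg (g n) m = g m"
  shows "\<exists>x\<in>\<Omega>. \<forall>n. x (diag 0, n) = g n"
proof -
  define x where "x = (\<lambda>(m, n). if m \<le> n then rest_seg (g n) m else undefined)"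
  have x: "x (m, n) = rest_seg (g n) m" if "m \<le> n" for m n
    using that by (simp add: x_def)
  have x_diag: "x (m, m) = s (g m)" for m
    using x[of m m] init_rest_seg_full(2)[OF g(1)] g(2) by simp
  have "x \<in> \<Omega>"
    unfolding inf_paths_def
  proof (intro CollectI conjI allI impI)
    fix m n :: "'k \<Rightarrow> nat" assume mn: "m \<le> n"
    then have le: "m \<le> d (g n)" using g(2) by simp
    show "x (m, n) \<in> P" "d (x (m, n)) = (\<lambda>i. n i - m i)"
      using init_rest_seg(2,5)[OF g(1) le] x[OF mn] g(2) by simp_all
    show "r (x (m, n)) = x (m, m)"
      using init_rest_seg(3)[OF g(1) le] x[OF mn] x_diag coherent[OF mn] by simp
    show "s (x (m, n)) = x (n, n)"
      using s_rest_seg[OF g(1) le] x[OF mn] x_diag by simp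
  next
    fix m :: "'k \<Rightarrow> nat"
    show "r (x (m, m)) = x (m, m)" using x_diag rs_idem(3)[OF g(1)] by simp
  next
    fix m n p :: "'k \<Rightarrow> nat" assume "m \<le> n \<and> n \<le> p"
    then show "cmp (x (m, n)) (x (n, p)) = x (m, p)"
      using init_seg_init_seg(2)[of "g p" m n] g coherent x order_trans by metis
  next
    fix m n :: "'k \<Rightarrow> nat" assume "\<not> m \<le> n"
    then show "x (m, n) = undefined" by (simp add: x_def)
  qed
  moreover have "x (diag 0, n) = g n" for n
    using x[of "diag 0" n] init_rest_seg_zero(2)[OF g(1)] by (simp add: le_fun_def)
  ultimately show ?thesis by blast
qed

lemma init_seg_coherent:
  assumes lam: "\<And>n. lam n \<in> P" "\<And>n. d (lam n) = diag n"
    and coherent: "\<And>n. init_seg (lam (Suc n)) (diag n) = lam n"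
    and "M \<le> N"
  shows "init_seg (lam N) (diag M) = lam M"
  using \<open>M \<le> N\<close>
proof (induction N rule: dec_induct)
  case base
  then show ?case using init_rest_seg_full(1)[OF lam(1)] lam(2) by simp
next
  case (step k)
  have "init_seg (lam (Suc k)) (diag M) = init_seg (init_seg (lam (Suc k)) (diag k)) (diag M)"
    using init_seg_init_seg(1)[of "lam (Suc k)" "diag M" "diag k"] lam step(1)
    by (simp add: le_fun_def)
  then show ?case using coherent step.IH by simp
qed

lemma inf_path_of_coherent:
  assumes lam: "\<And>n. lam n \<in> P" "\<And>n. d (lam n) = diag n"
    and coherent: "\<And>n. init_seg (lam (Suc n)) (diag n) = lam n"
  shows "\<exists>x\<in>\<Omega>. \<forall>n. x (diag 0, diag n) = lam n"
proof -
  note lam_le = init_seg_coherent[OF lam coherent]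
  have lam_init_seg: "init_seg (lam M) n = init_seg (lam N) n" if "n \<le> diag N" "N \<le> M" for n N M
    using init_seg_init_seg(1)[of "lam M" n "diag N"] lam lam_le[OF that(2)] that
    by (simp add: le_fun_def)
  define K :: "('k \<Rightarrow> nat) \<Rightarrow> nat" where "K n = sum n UNIV" for n
  have le_K: "n \<le> diag (K n)" for n
    unfolding K_def le_fun_def by (auto intro: member_le_sum)
  define g where "g n = init_seg (lam (K n)) n" for n
  have g_eq: "g n = init_seg (lam N) n" if "n \<le> diag N" for n N
    using lam_init_seg[of n N "max N (K n)"] lam_init_seg[of n "K n" "max N (K n)"] that le_K[of n]
    unfolding g_def by simp
  have g: "g n \<in> P" "d (g n) = n" for n
    using init_rest_seg(1,4)[of "lam (K n)" n] lam le_K unfolding g_def by auto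
  have "init_seg (g n) m = g m" if "m \<le> n" for m n
    using init_seg_init_seg(1)[of "lam (K n)" m n] g_eq[of m "K n"] lam le_K[of n] that
    unfolding g_def by (simp add: order_trans)
  then obtain x where x: "x \<in> \<Omega>" "\<forall>n. x (diag 0, n) = g n"
    using inf_path_of_init_segs[OF g] by blast
  moreover have "g (diag n) = lam n" for n
    using g_eq[of "diag n" n] lam_le[of n n] by simp
  ultimately have "\<forall>n. x (diag 0, diag n) = lam n" by simp
  with x(1) show ?thesis by blast
qed

subsection \<open>Cylinders of square degree\<close>

definition square_paths :: "nat \<Rightarrow> 'p set" where
  "square_paths N = {t \<in> P. d t = diag N}"

definition cyl :: "nat \<Rightarrow> 'p set \<Rightarrow> ((('k \<Rightarrow> nat) \<times> ('k \<Rightarrow> nat)) \<Rightarrow> 'p) set" where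
  "cyl N S = {x \<in> \<Omega>. x (diag 0, diag N) \<in> S}"

definition lift :: "nat \<Rightarrow> nat \<Rightarrow> 'p set \<Rightarrow> 'p set" where
  "lift N K S = {t \<in> square_paths K. init_seg t (diag N) \<in> S}"

lemma inf_path_square_seg: "x \<in> \<Omega> \<Longrightarrow> x (diag 0, diag N) \<in> square_paths N"
  using inf_path_seg(1,2)[of x "diag 0" "diag N"] unfolding square_paths_def by (simp add: le_fun_def)

lemma cyl_lift: "N \<le> K \<Longrightarrow> cyl N S = cyl K (lift N K S)"
  unfolding cyl_def lift_def using inf_path_square_seg init_rest_seg_inf_path(1)[of _ "diag N" "diag K"]
  by (auto simp: le_fun_def)

lemma cylinder_eq_cyl:
  assumes "d t \<le> diag K"
  shows "cylinder P r s cmp d t = cyl K (extensions t (diag K))"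
  unfolding cylinder_def cyl_def extensions_def
  using inf_path_square_seg[of _ K] init_rest_seg_inf_path(1)[of _ "d t" "diag K"] assms
  by (auto simp: square_paths_def)

end

locale rfns_k_graph = k_graph P r s cmp d
  for P :: "'p set" and r s :: "'p \<Rightarrow> 'p" and cmp :: "'p \<Rightarrow> 'p \<Rightarrow> 'p"
    and d :: "'p \<Rightarrow> ('k::finite \<Rightarrow> nat)" +
  assumes row_finite: "row_finite P r d"
    and no_sources: "no_sources P r d"
begin

lemma finite_paths_from: "v \<in> vertices P r \<Longrightarrow> finite (paths_from P r d v n)"
  using row_finite unfolding row_finite_def by blast

lemma paths_from_nonempty: "v \<in> vertices P r \<Longrightarrow> paths_from P r d v n \<noteq> {}"
  using no_sources unfolding no_sources_def by blast

lemma finite_extensions: "l \<in> P \<Longrightarrow> d l \<le> n \<Longrightarrow> finite (extensions l n)"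
  using extensions_eq_image finite_paths_from vertices_rs(2) by simp

lemma sum_paths_from_add:
  assumes "v \<in> vertices P r"
  shows "(\<Sum>t\<in>paths_from P r d v (\<lambda>i. m i + n i). g t) =
    (\<Sum>a\<in>paths_from P r d v m. \<Sum>b\<in>paths_from P r d (s a) n. g (cmp a b))"
proof -
  have fin: "finite (paths_from P r d v m)" "\<forall>a\<in>paths_from P r d v m. finite (paths_from P r d (s a) n)"
    using finite_paths_from assms vertices_rs(2) unfolding paths_from_def by auto
  have "(\<Sum>t\<in>paths_from P r d v (\<lambda>i. m i + n i). g t) =
      (\<Sum>(a, b)\<in>(SIGMA a:paths_from P r d v m. paths_from P r d (s a) n). g (cmp a b))"
    unfolding paths_from_add sum.reindex[OF inj_on_cmp_paths_from] by (simp add: case_prod_unfold)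
  also have "\<dots> = (\<Sum>a\<in>paths_from P r d v m. \<Sum>b\<in>paths_from P r d (s a) n. g (cmp a b))"
    by (rule sum.Sigma[OF fin, symmetric])
  finally show ?thesis .
qed

lemma infsum_adj_eq_sum_paths_from:
  assumes u: "u \<in> vertices P r"
  shows "(\<Sum>\<^sub>\<infinity>w\<in>vertices P r. real (adj P r s d i u w) * f w) =
    (\<Sum>b\<in>paths_from P r d u (unit_deg i). f (s b))"
proof -
  let ?F = "paths_from P r d u (unit_deg i)"
  have fin: "finite ?F" using finite_paths_from[OF u] .
  have "(\<Sum>\<^sub>\<infinity>w\<in>vertices P r. real (adj P r s d i u w) * f w)
      = (\<Sum>\<^sub>\<infinity>w\<in>s ` ?F. real (adj P r s d i u w) * f w)"
  proof (rule infsum_cong_neutral)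
    fix w assume "w \<in> vertices P r - s ` ?F"
    then have "paths_between P r s d u (unit_deg i) w = {}"
      unfolding paths_between_def paths_from_def by auto
    then show "real (adj P r s d i u w) * f w = 0" unfolding adj_def by simp
  next
    fix w assume "w \<in> s ` ?F - vertices P r"
    then show "real (adj P r s d i u w) * f w = 0"
      using vertices_rs(2) unfolding paths_from_def by auto
  qed simp
  also have "\<dots> = (\<Sum>w\<in>s ` ?F. real (adj P r s d i u w) * f w)"
    using fin by simp
  also have "\<dots> = (\<Sum>w\<in>s ` ?F. \<Sum>b\<in>{b\<in>?F. s b = w}. f (s b))"
  proof (rule sum.cong[OF refl])
    fix w
    have "{b\<in>?F. s b = w} = paths_between P r s d u (unit_deg i) w"
      unfolding paths_between_def paths_from_def by auto
    moreover have "(\<Sum>b\<in>{b\<in>?F. s b = w}. f (s b)) = (\<Sum>b\<in>{b\<in>?F. s b = w}. f w)"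
      by (rule sum.cong) auto
    ultimately show "real (adj P r s d i u w) * f w = (\<Sum>b\<in>{b\<in>?F. s b = w}. f (s b))"
      unfolding adj_def by simp
  qed
  also have "\<dots> = (\<Sum>b\<in>?F. f (s b))"
    using sum.image_gen[OF fin, of "\<lambda>b. f (s b)" s] by (rule sym)
  finally show ?thesis .
qed

lemma extension_exists:
  assumes "u \<in> P"
  shows "\<exists>u'. u' \<in> P \<and> d u' = (\<lambda>i. d u i + 1) \<and> init_seg u' (d u) = u"
proof -
  obtain e where "e \<in> paths_from P r d (s u) (diag 1)"
    using paths_from_nonempty[OF vertices_rs(2)[OF assms]] by blast
  then have e: "e \<in> P" "s u = r e" "d e = diag 1"
    unfolding paths_from_def by auto
  then have "cmp u e \<in> P" "d (cmp u e) = (\<lambda>i. d u i + 1)" "init_seg (cmp u e) (d u) = u"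
    using cmp_closed(1)[OF assms e(1,2)] d_cmp[OF assms e(1,2)] init_rest_seg_cmp(1)[OF assms e(1,2)]
    by simp_all
  then show ?thesis by blast
qed

lemma extension_chain:
  assumes "t \<in> P" "d t = diag N"
  shows "\<exists>\<sigma>. \<forall>j. (\<sigma> j \<in> P \<and> d (\<sigma> j) = diag (N + j) \<and> init_seg (\<sigma> j) (diag N) = t)
      \<and> init_seg (\<sigma> (Suc j)) (diag (N + j)) = \<sigma> j"
proof (rule dependent_nat_choice)
  show "\<exists>u. u \<in> P \<and> d u = diag (N + 0) \<and> init_seg u (diag N) = t"
    using assms init_rest_seg_full(1)[of t] by auto
next
  fix u j assume u: "u \<in> P \<and> d u = diag (N + j) \<and> init_seg u (diag N) = t"
  then obtain u' where u': "u' \<in> P" "d u' = (\<lambda>i. d u i + 1)" "init_seg u' (d u) = u"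
    using extension_exists by blast
  have "init_seg u' (diag N) = t"
    using init_seg_init_seg(1)[of u' "diag N" "d u"] u u' by (simp add: le_fun_def)
  with u u' show "\<exists>u'. (u' \<in> P \<and> d u' = diag (N + Suc j) \<and> init_seg u' (diag N) = t)
      \<and> init_seg u' (diag (N + j)) = u"
    by auto
qed

lemma inf_path_through:
  assumes "t \<in> P" "d t = diag N"
  shows "\<exists>x\<in>\<Omega>. x (diag 0, diag N) = t"
proof -
  obtain \<sigma> where \<sigma>: "\<And>j. \<sigma> j \<in> P" "\<And>j. d (\<sigma> j) = diag (N + j)"
      "\<And>j. init_seg (\<sigma> j) (diag N) = t"
    and \<sigma>_Suc: "\<And>j. init_seg (\<sigma> (Suc j)) (diag (N + j)) = \<sigma> j"
    using extension_chain[OF assms] by blast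
  define lam where "lam m = init_seg (\<sigma> m) (diag m)" for m
  have lam: "lam m \<in> P" "d (lam m) = diag m" for m
    using init_rest_seg(1,4)[of "\<sigma> m" "diag m"] \<sigma> unfolding lam_def by (auto simp: le_fun_def)
  have "init_seg (lam (Suc m)) (diag m) = lam m" for m
  proof -
    have "init_seg (lam (Suc m)) (diag m) = init_seg (\<sigma> (Suc m)) (diag m)"
      using init_seg_init_seg(1)[of "\<sigma> (Suc m)" "diag m" "diag (Suc m)"] \<sigma>
      unfolding lam_def by (simp add: le_fun_def)
    also have "\<dots> = init_seg (init_seg (\<sigma> (Suc m)) (diag (N + m))) (diag m)"
      using init_seg_init_seg(1)[of "\<sigma> (Suc m)" "diag m" "diag (N + m)"] \<sigma>
      by (simp add: le_fun_def)
    also have "\<dots> = lam m"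
      unfolding \<sigma>_Suc lam_def ..
    finally show ?thesis .
  qed
  then obtain x where "x \<in> \<Omega>" "\<forall>n. x (diag 0, diag n) = lam n"
    using inf_path_of_coherent[OF lam] by blast
  moreover have "lam N = t"
    using \<sigma>(3) unfolding lam_def by simp
  ultimately show ?thesis by auto
qed

lemma finite_lift:
  assumes "N \<le> K" "finite S"
  shows "finite (lift N K S)"
proof (rule finite_subset)
  show "lift N K S \<subseteq> (\<Union>\<sigma>\<in>S \<inter> P. paths_from P r d (r \<sigma>) (diag K))"
  proof
    fix t assume "t \<in> lift N K S"
    then have t: "t \<in> P" "d t = diag K" "init_seg t (diag N) \<in> S" and le: "diag N \<le> d t"
      using assms(1) unfolding lift_def square_paths_def by (auto simp: le_fun_def)
    then show "t \<in> (\<Union>\<sigma>\<in>S \<inter> P. paths_from P r d (r \<sigma>) (diag K))"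
      using init_rest_seg(1)[OF t(1) le] r_init_seg[OF t(1) le]
      by (intro UN_I[of "init_seg t (diag N)"]) (auto simp: paths_from_def)
  qed
  show "finite (\<Union>\<sigma>\<in>S \<inter> P. paths_from P r d (r \<sigma>) (diag K))"
    using assms(2) finite_paths_from vertices_rs(1) by auto
qed

lemma cyl_inj:
  assumes "S \<subseteq> square_paths K" "T \<subseteq> square_paths K" "cyl K S = cyl K T"
  shows "S = T"
proof -
  have "t \<in> T" if t: "t \<in> S" "S \<subseteq> square_paths K" and eq: "cyl K S = cyl K T" for S T t
  proof -
    obtain x where "x \<in> \<Omega>" "x (diag 0, diag K) = t"
      using inf_path_through[of t K] t unfolding square_paths_def by blast
    then show ?thesis using t eq unfolding cyl_def by blast
  qed
  then show ?thesis using assms by blast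
qed

definition cyl_ring :: "((('k \<Rightarrow> nat) \<times> ('k \<Rightarrow> nat)) \<Rightarrow> 'p) set set" where
  "cyl_ring = {cyl N S | N S. finite S}"

lemma cyl_ring_common_level:
  assumes "A \<in> cyl_ring" "B \<in> cyl_ring"
  obtains K S T where "finite S" "finite T" "S \<subseteq> square_paths K" "T \<subseteq> square_paths K"
    "A = cyl K S" "B = cyl K T"
proof -
  obtain N S M T where NS: "finite S" "A = cyl N S" "finite T" "B = cyl M T"
    using assms unfolding cyl_ring_def by blast
  have le: "N \<le> max N M" "M \<le> max N M" by simp_all
  show ?thesis
    using that[of "lift N (max N M) S" "lift M (max N M) T" "max N M"] NS
      cyl_lift[OF le(1)] cyl_lift[OF le(2)] finite_lift[OF le(1)] finite_lift[OF le(2)]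
    unfolding lift_def by auto
qed

lemma ring_of_sets_cyl_ring: "ring_of_sets \<Omega> cyl_ring"
proof (rule ring_of_setsI)
  show "cyl_ring \<subseteq> Pow \<Omega>" unfolding cyl_ring_def cyl_def by auto
  have "{} = cyl 0 {}" unfolding cyl_def by simp
  then show "{} \<in> cyl_ring" unfolding cyl_ring_def by blast
  fix A B assume "A \<in> cyl_ring" "B \<in> cyl_ring"
  then obtain K S T where KST: "finite S" "finite T" "A = cyl K S" "B = cyl K T"
    by (rule cyl_ring_common_level)
  have "A \<union> B = cyl K (S \<union> T)" "A - B = cyl K (S - T)"
    using KST unfolding cyl_def by auto
  then show "A \<union> B \<in> cyl_ring" "A - B \<in> cyl_ring"
    using KST unfolding cyl_ring_def by auto
qed

lemma cylinder_in_cyl_ring: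
  assumes "t \<in> P"
  shows "cylinder P r s cmp d t \<in> cyl_ring"
proof -
  have le: "d t \<le> diag (sum (d t) UNIV)"
    unfolding le_fun_def by (auto intro: member_le_sum)
  show ?thesis
    unfolding cylinder_eq_cyl[OF le] cyl_ring_def using finite_extensions[OF assms le] by blast
qed

lemma sigma_sets_cyl_ring: "sigma_sets \<Omega> cyl_ring = borel_inf_paths P r s cmp d"
  unfolding borel_inf_paths_def
proof (rule equalityI)
  have "cylinder P r s cmp d ` P \<subseteq> Pow \<Omega>"
    unfolding cylinder_def by auto
  then interpret sigma_algebra \<Omega> "sigma_sets \<Omega> (cylinder P r s cmp d ` P)"
    by (rule sigma_algebra_sigma_sets)
  show "sigma_sets \<Omega> cyl_ring \<subseteq> sigma_sets \<Omega> (cylinder P r s cmp d ` P)"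
  proof (rule sigma_sets_mono, rule subsetI)
    fix A assume "A \<in> cyl_ring"
    then obtain N S where NS: "finite S" "A = cyl N S"
      unfolding cyl_ring_def by blast
    have "A = (\<Union>t\<in>S \<inter> square_paths N. cylinder P r s cmp d t)"
      unfolding NS(2) cyl_def cylinder_def using inf_path_square_seg[of _ N]
      by (auto simp: square_paths_def)
    also have "\<dots> \<in> sigma_sets \<Omega> (cylinder P r s cmp d ` P)"
      using NS(1) unfolding square_paths_def by (intro finite_UN) (auto intro: sigma_sets.Basic)
    finally show "A \<in> sigma_sets \<Omega> (cylinder P r s cmp d ` P)" .
  qed
  show "sigma_sets \<Omega> (cylinder P r s cmp d ` P) \<subseteq> sigma_sets \<Omega> cyl_ring"
    using cylinder_in_cyl_ring by (intro sigma_sets_mono') auto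
qed

definition common_seg :: "(nat \<Rightarrow> ((('k \<Rightarrow> nat) \<times> ('k \<Rightarrow> nat)) \<Rightarrow> 'p) set) \<Rightarrow> nat \<Rightarrow> 'p \<Rightarrow> bool"
  where "common_seg A n t \<longleftrightarrow> (\<forall>i. \<exists>x\<in>A i. x (diag 0, diag n) = t)"

lemma common_seg_square_paths:
  assumes "\<And>i. A i \<subseteq> \<Omega>" "common_seg A n t"
  shows "t \<in> square_paths n"
proof -
  obtain x where "x \<in> A 0" "x (diag 0, diag n) = t"
    using assms(2) unfolding common_seg_def by blast
  then show ?thesis
    using inf_path_square_seg[of x n] assms(1)[of 0] by auto
qed

lemma common_seg_0:
  assumes "decseq A" "\<And>i. A i \<noteq> {}" "A 0 = cyl N S" "finite S"
  shows "\<exists>v. common_seg A 0 v"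
proof -
  have "\<exists>v\<in>r ` S. \<forall>i. \<exists>x\<in>A i. x (diag 0, diag 0) = v"
  proof (rule ex_in_finite_forall_antimono)
    show "finite (r ` S)" using assms(4) by simp
  next
    fix i
    obtain x where x: "x \<in> A i" using assms(2) by blast
    then have "x \<in> cyl N S" using assms(1,3) unfolding decseq_def by blast
    then have "x \<in> \<Omega>" "x (diag 0, diag N) \<in> S" unfolding cyl_def by auto
    moreover have "r (x (diag 0, diag N)) = x (diag 0, diag 0)"
      using inf_path_seg(3) calculation(1) by (simp add: le_fun_def)
    ultimately show "\<exists>v\<in>r ` S. \<exists>x\<in>A i. x (diag 0, diag 0) = v"
      using x by (metis image_eqI)
  next
    fix i j v assume "i \<le> j" "\<exists>x\<in>A j. x (diag 0, diag 0) = v"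
    then show "\<exists>x\<in>A i. x (diag 0, diag 0) = v"
      using assms(1) unfolding decseq_def by blast
  qed
  then show ?thesis unfolding common_seg_def by blast
qed

lemma common_seg_Suc:
  assumes "decseq A" "\<And>i. A i \<subseteq> \<Omega>" "common_seg A n t"
  shows "\<exists>t'. common_seg A (Suc n) t' \<and> init_seg t' (diag n) = t"
proof -
  have le: "diag 0 \<le> diag n" "diag n \<le> diag (Suc n)" by (simp_all add: le_fun_def)
  have t: "t \<in> P"
    using common_seg_square_paths[OF assms(2,3)] unfolding square_paths_def by blast
  have "\<exists>t'\<in>paths_from P r d (r t) (diag (Suc n)).
      \<forall>i. \<exists>x\<in>A i. x (diag 0, diag (Suc n)) = t' \<and> x (diag 0, diag n) = t"
  proof (rule ex_in_finite_forall_antimono)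
    show "finite (paths_from P r d (r t) (diag (Suc n)))"
      using finite_paths_from vertices_rs(1)[OF t] by blast
  next
    fix i
    obtain x where x: "x \<in> A i" "x (diag 0, diag n) = t"
      using assms(3) unfolding common_seg_def by blast
    then have "x \<in> \<Omega>" using assms(2) by blast
    then have "x (diag 0, diag (Suc n)) \<in> paths_from P r d (r t) (diag (Suc n))"
      using inf_path_seg[of x "diag 0" "diag (Suc n)"] inf_path_seg(3)[OF _ le(1), of x] x(2)
      unfolding paths_from_def by (auto simp: le_fun_def)
    with x show "\<exists>t'\<in>paths_from P r d (r t) (diag (Suc n)).
        \<exists>x\<in>A i. x (diag 0, diag (Suc n)) = t' \<and> x (diag 0, diag n) = t"
      by blast
  next
    fix i j t' assume "i \<le> j" "\<exists>x\<in>A j. x (diag 0, diag (Suc n)) = t' \<and> x (diag 0, diag n) = t"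
    then show "\<exists>x\<in>A i. x (diag 0, diag (Suc n)) = t' \<and> x (diag 0, diag n) = t"
      using assms(1) unfolding decseq_def by blast
  qed
  then obtain t' where t': "\<forall>i. \<exists>x\<in>A i. x (diag 0, diag (Suc n)) = t' \<and> x (diag 0, diag n) = t"
    by blast
  then obtain x where x: "x \<in> A 0" "x (diag 0, diag (Suc n)) = t'" "x (diag 0, diag n) = t"
    by blast
  then have "init_seg t' (diag n) = t"
    using init_rest_seg_inf_path(1)[OF _ le(2), of x] assms(2) by blast
  moreover have "common_seg A (Suc n) t'"
    using t' unfolding common_seg_def by blast
  ultimately show ?thesis by blast
qed

text \<open>Koenig's lemma: by row-finiteness, initial segments common to all \<open>A i\<close> can be
  extended step by step, and their limit is a point of every \<open>A i\<close>.\<close>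

lemma Inter_cyl_ring_nonempty:
  assumes "range A \<subseteq> cyl_ring" "decseq A" "\<And>i. A i \<noteq> {}"
  shows "(\<Inter>i. A i) \<noteq> {}"
proof -
  have "\<forall>i. \<exists>N S. finite S \<and> A i = cyl N S"
    using assms(1) unfolding cyl_ring_def by blast
  then obtain N S where NS: "\<And>i. finite (S i)" "\<And>i. A i = cyl (N i) (S i)"
    by metis
  then have A_\<Omega>: "A i \<subseteq> \<Omega>" for i
    unfolding cyl_def by auto
  have "\<exists>lam. \<forall>n. common_seg A n (lam n) \<and> init_seg (lam (Suc n)) (diag n) = lam n"
    by (rule dependent_nat_choice[where Q = "\<lambda>n t t'. init_seg t' (diag n) = t"])
      (use common_seg_0[OF assms(2,3) NS(2) NS(1)] common_seg_Suc[OF assms(2) A_\<Omega>] in auto)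
  then obtain lam where lam: "\<And>n. common_seg A n (lam n)"
    and coherent: "\<And>n. init_seg (lam (Suc n)) (diag n) = lam n"
    by blast
  have "lam n \<in> P" "d (lam n) = diag n" for n
    using common_seg_square_paths[OF A_\<Omega> lam] unfolding square_paths_def by auto
  then obtain x where x: "x \<in> \<Omega>" "\<forall>n. x (diag 0, diag n) = lam n"
    using inf_path_of_coherent[OF _ _ coherent] by blast
  have "x \<in> A i" for i
  proof -
    obtain y where "y \<in> A i" "y (diag 0, diag (N i)) = lam (N i)"
      using lam unfolding common_seg_def by blast
    then have "lam (N i) \<in> S i"
      using NS(2) unfolding cyl_def by auto
    then show ?thesis
      using NS(2) x unfolding cyl_def by auto
  qed
  then show ?thesis by blast
qed

end

subsection \<open>Weights and the premeasure\<close>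

locale k_graph_eigenvector = rfns_k_graph P r s cmp d
  for P :: "'p set" and r s :: "'p \<Rightarrow> 'p" and cmp :: "'p \<Rightarrow> 'p \<Rightarrow> 'p"
    and d :: "'p \<Rightarrow> ('k::finite \<Rightarrow> nat)" +
  fixes \<xi> :: "'p \<Rightarrow> real" and \<beta> :: "'k \<Rightarrow> real"
  assumes \<xi>_pos: "\<forall>v\<in>vertices P r. \<xi> v > 0"
    and eigenvector: "\<forall>i. \<forall>v\<in>vertices P r.
      (\<Sum>\<^sub>\<infinity>w\<in>vertices P r. real (adj P r s d i v w) * \<xi> w) = \<beta> i * \<xi> v"
begin

lemma sum_paths_from_unit_deg:
  assumes "u \<in> vertices P r"
  shows "(\<Sum>b\<in>paths_from P r d u (unit_deg i). \<xi> (s b)) = \<beta> i * \<xi> u"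
  using infsum_adj_eq_sum_paths_from[OF assms, of i \<xi>] eigenvector assms by simp

lemma eigenvalue_pos:
  assumes u: "u \<in> vertices P r"
  shows "\<beta> i > 0"
proof -
  let ?F = "paths_from P r d u (unit_deg i)"
  have "(\<Sum>b\<in>?F. \<xi> (s b)) > 0"
  proof (rule sum_pos)
    show "finite ?F" "?F \<noteq> {}" using finite_paths_from[OF u] paths_from_nonempty[OF u] .
    fix b assume "b \<in> ?F"
    then show "\<xi> (s b) > 0" using \<xi>_pos vertices_rs(2)[of b] unfolding paths_from_def by auto
  qed
  moreover have "\<xi> u > 0" using \<xi>_pos u by blast
  ultimately show ?thesis
    using sum_paths_from_unit_deg[OF u] by (simp add: zero_less_mult_iff)
qed

lemma sum_paths_from_eigen:
  "v \<in> vertices P r \<Longrightarrow> (\<Sum>t\<in>paths_from P r d v n. \<xi> (s t)) = (\<Prod>i\<in>UNIV. \<beta> i ^ n i) * \<xi> v"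
proof (induction "sum n UNIV" arbitrary: n v)
  case 0
  then have "n = (\<lambda>_. 0)" by (simp add: fun_eq_iff)
  moreover have "s v = v"
    using "0.prems" rs_idem(2) unfolding vertices_def by force
  ultimately show ?case using paths_from_zero[OF "0.prems"] by simp
next
  case (Suc k)
  then obtain i where "n i > 0"
    by (metis gr0I sum.neutral_const sum.not_neutral_contains_not_neutral Zero_not_Suc)
  define n' where "n' = n(i := n i - 1)"
  have n: "n = (\<lambda>j. n' j + unit_deg i j)"
    using \<open>n i > 0\<close> unfolding n'_def unit_deg_def by auto
  have "sum n' UNIV + 1 = Suc k"
    using Suc.hyps(2) unfolding n by (simp add: sum.distrib unit_deg_def)
  then have IH: "(\<Sum>t\<in>paths_from P r d w n'. \<xi> (s t)) = (\<Prod>j\<in>UNIV. \<beta> j ^ n' j) * \<xi> w"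
    if "w \<in> vertices P r" for w
    using Suc.hyps(1) that by simp
  have "(\<Sum>t\<in>paths_from P r d v n. \<xi> (s t)) =
      (\<Sum>a\<in>paths_from P r d v n'. \<Sum>b\<in>paths_from P r d (s a) (unit_deg i). \<xi> (s (cmp a b)))"
    using sum_paths_from_add[OF Suc.prems, where m = n' and n = "unit_deg i"] n by simp
  also have "\<dots> = (\<Sum>a\<in>paths_from P r d v n'. \<Sum>b\<in>paths_from P r d (s a) (unit_deg i). \<xi> (s b))"
    by (intro sum.cong refl) (auto simp: paths_from_def cmp_closed)
  also have "\<dots> = \<beta> i * (\<Sum>a\<in>paths_from P r d v n'. \<xi> (s a))"
    unfolding sum_distrib_left
    by (intro sum.cong refl sum_paths_from_unit_deg) (auto simp: paths_from_def vertices_rs)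
  also have "\<dots> = (\<Prod>j\<in>UNIV. \<beta> j ^ n j) * \<xi> v"
    unfolding IH[OF Suc.prems] n prod_power_add_unit_deg by simp
  finally show ?case .
qed

definition weight :: "'p \<Rightarrow> real" where
  "weight l = (\<Prod>i\<in>UNIV. inverse (\<beta> i) ^ d l i) * \<xi> (s l)"

lemma weight_nonneg: "l \<in> P \<Longrightarrow> weight l \<ge> 0"
  unfolding weight_def using eigenvalue_pos[OF vertices_rs(1)] \<xi>_pos vertices_rs(2)
  by (intro mult_nonneg_nonneg prod_nonneg) (auto intro: less_imp_le)

lemma sum_weight_extensions:
  assumes l: "l \<in> P" and le: "d l \<le> n"
  shows "(\<Sum>t\<in>extensions l n. weight t) = weight l"
proof -
  let ?m = "\<lambda>i. n i - d l i"
  have \<beta>_pos: "\<beta> i > 0" for i using eigenvalue_pos[OF vertices_rs(1)[OF l]] .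
  have "(\<Sum>t\<in>extensions l n. weight t) = (\<Sum>m\<in>paths_from P r d (s l) ?m. weight (cmp l m))"
    unfolding extensions_eq_image[OF l le] sum.reindex[OF inj_on_cmp_left[OF l]] by simp
  also have "\<dots> = (\<Sum>m\<in>paths_from P r d (s l) ?m. (\<Prod>i\<in>UNIV. inverse (\<beta> i) ^ n i) * \<xi> (s m))"
  proof (rule sum.cong[OF refl])
    fix m assume "m \<in> paths_from P r d (s l) ?m"
    then have m: "m \<in> P" "s l = r m" "d m = ?m" unfolding paths_from_def by auto
    have "d (cmp l m) = n" using d_cmp[OF l m(1,2)] m(3) le by (auto simp: le_fun_def)
    then show "weight (cmp l m) = (\<Prod>i\<in>UNIV. inverse (\<beta> i) ^ n i) * \<xi> (s m)"
      unfolding weight_def using cmp_closed(3)[OF l m(1,2)] by simp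
  qed
  also have "\<dots> = (\<Prod>i\<in>UNIV. inverse (\<beta> i) ^ n i) * ((\<Prod>i\<in>UNIV. \<beta> i ^ ?m i) * \<xi> (s l))"
    using sum_paths_from_eigen[OF vertices_rs(2)[OF l]] by (simp add: sum_distrib_left[symmetric])
  also have "\<dots> = weight l"
  proof -
    have "inverse (\<beta> i) ^ n i * \<beta> i ^ ?m i = inverse (\<beta> i) ^ d l i" for i
    proof -
      have "d l i \<le> n i" using le by (simp add: le_fun_def)
      then have "inverse (\<beta> i) ^ n i = inverse (\<beta> i) ^ d l i * inverse (\<beta> i) ^ ?m i"
        by (simp flip: power_add)
      then have "inverse (\<beta> i) ^ n i * \<beta> i ^ ?m i
          = inverse (\<beta> i) ^ d l i * (inverse (\<beta> i) * \<beta> i) ^ ?m i"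
        by (simp add: power_mult_distrib mult.assoc)
      then show ?thesis using \<beta>_pos[of i] by simp
    qed
    then have "(\<Prod>i\<in>UNIV. inverse (\<beta> i) ^ n i) * (\<Prod>i\<in>UNIV. \<beta> i ^ ?m i)
        = (\<Prod>i\<in>UNIV. inverse (\<beta> i) ^ d l i)"
      unfolding prod.distrib[symmetric] by simp
    then show ?thesis unfolding weight_def by (simp add: mult.assoc)
  qed
  finally show ?thesis .
qed

lemma sum_weight_lift:
  assumes "N \<le> K" "finite S"
  shows "(\<Sum>t\<in>S \<inter> square_paths N. weight t) = (\<Sum>t\<in>lift N K S. weight t)"
proof -
  have le: "diag N \<le> d t" if "t \<in> lift N K S" for t
    using that assms(1) unfolding lift_def square_paths_def by (auto simp: le_fun_def)
  have "(\<lambda>t. init_seg t (diag N)) ` lift N K S \<subseteq> S \<inter> square_paths N"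
    using init_rest_seg(1,4) le unfolding lift_def square_paths_def by auto
  from sum.group[OF finite_lift[OF assms] _ this, of weight]
  have "(\<Sum>t\<in>lift N K S. weight t) =
      (\<Sum>u\<in>S \<inter> square_paths N. \<Sum>t\<in>{t \<in> lift N K S. init_seg t (diag N) = u}. weight t)"
    using assms(2) by simp
  also have "\<dots> = (\<Sum>u\<in>S \<inter> square_paths N. weight u)"
  proof (rule sum.cong[OF refl])
    fix u assume u: "u \<in> S \<inter> square_paths N"
    then have "{t \<in> lift N K S. init_seg t (diag N) = u} = extensions u (diag K)"
      unfolding lift_def square_paths_def extensions_def by auto
    with u assms(1) show "(\<Sum>t\<in>{t \<in> lift N K S. init_seg t (diag N) = u}. weight t) = weight u"
      using sum_weight_extensions[of u "diag K"] unfolding square_paths_def by (simp add: le_fun_def)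
  qed
  finally show ?thesis by simp
qed

lemma sum_weight_cyl_eq:
  assumes "finite S" "finite T" "cyl N S = cyl M T"
  shows "(\<Sum>t\<in>S \<inter> square_paths N. weight t) = (\<Sum>t\<in>T \<inter> square_paths M. weight t)"
proof -
  define K where "K = max N M"
  have le: "N \<le> K" "M \<le> K" unfolding K_def by simp_all
  have "lift N K S = lift M K T"
    using cyl_inj[of "lift N K S" K "lift M K T"] cyl_lift[OF le(1)] cyl_lift[OF le(2)] assms(3)
    unfolding lift_def by auto
  then show ?thesis
    using sum_weight_lift[OF le(1) assms(1)] sum_weight_lift[OF le(2) assms(2)] by simp
qed

text \<open>On \<open>cyl_ring\<close> the choice below is independent of the representation, by
  \<open>sum_weight_cyl_eq\<close>.\<close>

definition premeasure :: "((('k \<Rightarrow> nat) \<times> ('k \<Rightarrow> nat)) \<Rightarrow> 'p) set \<Rightarrow> ennreal" where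
  "premeasure A = ennreal (SOME w. \<exists>N S. finite S \<and> A = cyl N S \<and> w = (\<Sum>t\<in>S \<inter> square_paths N. weight t))"

lemma premeasure_cyl:
  assumes "finite S"
  shows "premeasure (cyl N S) = ennreal (\<Sum>t\<in>S \<inter> square_paths N. weight t)"
proof -
  have "\<exists>w N' S'. finite S' \<and> cyl N S = cyl N' S' \<and> w = (\<Sum>t\<in>S' \<inter> square_paths N'. weight t)"
    using assms by blast
  from someI_ex[OF this] obtain N' S' where S': "finite S'" "cyl N S = cyl N' S'"
    and choice: "(SOME w. \<exists>N' S'. finite S' \<and> cyl N S = cyl N' S' \<and>
      w = (\<Sum>t\<in>S' \<inter> square_paths N'. weight t)) = (\<Sum>t\<in>S' \<inter> square_paths N'. weight t)"
    by blast
  show ?thesis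
    unfolding premeasure_def choice sum_weight_cyl_eq[OF assms S'] ..
qed

lemma premeasure_empty: "premeasure {} = 0"
proof -
  have "cyl 0 {} = {}" unfolding cyl_def by simp
  then show ?thesis using premeasure_cyl[of "{}" 0] by simp
qed

lemma positive_premeasure: "positive cyl_ring premeasure"
  unfolding positive_def using premeasure_empty by simp

lemma additive_premeasure: "additive cyl_ring premeasure"
  unfolding additive_def
proof (intro ballI impI)
  fix A B assume A: "A \<in> cyl_ring" and B: "B \<in> cyl_ring" and disjoint: "A \<inter> B = {}"
  from A B obtain K S T where KST: "finite S" "finite T" "S \<subseteq> square_paths K" "T \<subseteq> square_paths K"
    "A = cyl K S" "B = cyl K T"
    by (rule cyl_ring_common_level)
  have "cyl K (S \<inter> T) = cyl K {}"
    using disjoint KST(5,6) unfolding cyl_def by auto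
  then have "S \<inter> T = {}"
    using cyl_inj[of "S \<inter> T" K "{}"] KST(3) by blast
  moreover have "A \<union> B = cyl K (S \<union> T)"
    using KST(5,6) unfolding cyl_def by auto
  moreover have "(\<Sum>t\<in>S. weight t) \<ge> 0" "(\<Sum>t\<in>T. weight t) \<ge> 0"
    using KST(3,4) weight_nonneg unfolding square_paths_def by (auto intro!: sum_nonneg)
  ultimately show "premeasure (A \<union> B) = premeasure A + premeasure B"
    using KST premeasure_cyl[of "S \<union> T" K] premeasure_cyl[of S K] premeasure_cyl[of T K]
    by (simp add: Int_absorb2 sum.union_disjoint ennreal_plus)
qed

lemma premeasure_continuous_empty:
  assumes "range A \<subseteq> cyl_ring" "decseq A" "(\<Inter>i. A i) = {}"
  shows "(\<lambda>i. premeasure (A i)) \<longlonglongrightarrow> 0"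
proof -
  obtain j where "A j = {}"
    using Inter_cyl_ring_nonempty[OF assms(1,2)] assms(3) by blast
  then have "A i = {}" if "j \<le> i" for i
    using assms(2) that unfolding decseq_def by blast
  then have "\<forall>\<^sub>F i in sequentially. premeasure (A i) = 0"
    using premeasure_empty by (intro eventually_sequentiallyI[of j]) simp
  then show ?thesis by (rule tendsto_eventually)
qed

lemma premeasure_cylinder:
  assumes "t \<in> P"
  shows "premeasure (cylinder P r s cmp d t) = ennreal (weight t)"
proof -
  have le: "d t \<le> diag (sum (d t) UNIV)"
    unfolding le_fun_def by (auto intro: member_le_sum)
  have "extensions t (diag (sum (d t) UNIV)) \<inter> square_paths (sum (d t) UNIV)
      = extensions t (diag (sum (d t) UNIV))"
    unfolding extensions_def square_paths_def by auto
  then show ?thesis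
    unfolding cylinder_eq_cyl[OF le] premeasure_cyl[OF finite_extensions[OF assms le]]
    using sum_weight_extensions[OF assms le] by simp
qed

lemma measure_exists:
  "\<exists>M. space M = \<Omega> \<and> sets M = borel_inf_paths P r s cmp d \<and>
    (\<forall>l\<in>P. emeasure M (cylinder P r s cmp d l) = ennreal (weight l))"
proof -
  interpret ring_of_sets \<Omega> cyl_ring
    by (rule ring_of_sets_cyl_ring)
  have finite: "premeasure A \<noteq> \<infinity>" for A
    unfolding premeasure_def by simp
  obtain \<mu> where \<mu>: "\<forall>A\<in>cyl_ring. \<mu> A = premeasure A" "measure_space \<Omega> (sigma_sets \<Omega> cyl_ring) \<mu>"
    using caratheodory_empty_continuous[OF positive_premeasure additive_premeasure finite
        premeasure_continuous_empty] by blast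
  define M where "M = measure_of \<Omega> cyl_ring \<mu>"
  have "space M = \<Omega>" "sets M = borel_inf_paths P r s cmp d"
    unfolding M_def using space_closed sigma_sets_cyl_ring by simp_all
  moreover have "emeasure M (cylinder P r s cmp d l) = ennreal (weight l)" if "l \<in> P" for l
    using cylinder_in_cyl_ring[OF that] \<mu> premeasure_cylinder[OF that]
    unfolding M_def emeasure_measure_of_conv by (auto intro: sigma_sets.Basic)
  ultimately show ?thesis by blast
qed

end

theorem theorem2p19:
  fixes P :: "'p set" and r s :: "'p \<Rightarrow> 'p" and cmp :: "'p \<Rightarrow> 'p \<Rightarrow> 'p"
    and d :: "'p \<Rightarrow> ('k::finite \<Rightarrow> nat)"
    and \<xi> :: "'p \<Rightarrow> real" and \<beta> :: "'k \<Rightarrow> real"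
  assumes "kgraph P r s cmp d"
    and "row_finite P r d"
    and "no_sources P r d"
    and "\<forall>v\<in>vertices P r. \<xi> v > 0"
    and "\<forall>i. \<forall>v\<in>vertices P r.
           (\<Sum>\<^sub>\<infinity>w\<in>vertices P r. real (adj P r s d i v w) * \<xi> w) = \<beta> i * \<xi> v"
  shows "\<exists>M. space M = inf_paths P r s cmp d \<and>
             sets M = borel_inf_paths P r s cmp d \<and>
             (\<forall>l\<in>P. emeasure M (cylinder P r s cmp d l)
                      = ennreal ((\<Prod>i\<in>UNIV. inverse (\<beta> i) ^ d l i) * \<xi> (s l)))"
proof -
  interpret k_graph_eigenvector P r s cmp d \<xi> \<beta>
    using k_graph_if_kgraph[OF assms(1)] assms(2-5)
    by (simp add: k_graph_eigenvector_def k_graph_eigenvector_axioms_def rfns_k_graph_def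
        rfns_k_graph_axioms_def)
  show ?thesis
    using measure_exists unfolding weight_def .
qed

end
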